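(* Fix $\gamma \in (\tfrac{2}{3},2)$ and let $x \in B_1^+(\mathrm{VI}_0)$. Suppose the Taub point $T_1$ belongs to the $\alpha$-limit set $\alpha(x)$. Then there exists a point $y \in \alpha(x)$ with $y \neq T_1$ and $\Omega(y) = 0$.
   Context: Set $q^* := \tfrac{3\gamma-2}{2} \in (0,2)$. On $\mathbb{R}^5$ with coordinates $(\Sigma_+,\Sigma_-,N_+,N_-,\Omega)$ consider the system (with $' = d/d\tau$) $\Sigma_+' = -(2-q)\Sigma_+ - 2N_-^2$, $\Sigma_-' = -(2-q)\Sigma_- - 2\sqrt{3}N_+N_-$, $N_+' = (q+2\Sigma_+)N_+ + 2\sqrt{3}\Sigma_- N_-$, $N_-' = (q+2\Sigma_+)N_- + 2\sqrt{3}\Sigma_- N_+$, $\Omega' = 2(q-q^* )\Omega$, where $q := 2(\Sigma_+^2+\Sigma_-^2) + q^*\Omega$. The phase space $B_1^+(\mathrm{VI}_0)$ is the set of points satisfying the constraint $\Omega + \Sigma_+^2 + \Sigma_-^2 + N_-^2 = 1$ together with $\Omega \ge 0$ and $N_- > |N_+|$; it is invariant under the flow, solutions exist for all $\tau\in\mathbb{R}$, and $\varphi^\tau(x)$ denotes the solution with $\varphi^0(x)=x$. The $\alpha$-limit set $\alpha(x)$ is the set of all limits of sequences $\varphi^{\tau_k}(x)$ with $\tau_k \to -\infty$ (these lie in the closure of $B_1^+(\mathrm{VI}_0)$ in $\mathbb{R}^5$). The Taub point $T_1$ is the point with $(\Sigma_+,\Sigma_-,N_+,N_-,\Omega) = (-1,0,0,0,0)$.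 *)

theory Defs
  imports "HOL-Analysis.Analysis"
begin

text \<open>Points of R^5 with coordinates (Sigma_+, Sigma_-, N_+, N_-, Omega) are
  represented as nested pairs (sp, sm, np, nm, om).\<close>

type_synonym state = "real \<times> real \<times> real \<times> real \<times> real"

definition qstar :: "real \<Rightarrow> real" where
  "qstar \<gamma> = (3 * \<gamma> - 2) / 2"

definition qfun :: "real \<Rightarrow> state \<Rightarrow> real" where
  "qfun \<gamma> p = (case p of (sp, sm, np, nm, om) \<Rightarrow> 2 * (sp\<^sup>2 + sm\<^sup>2) + qstar \<gamma> * om)"

definition vf :: "real \<Rightarrow> state \<Rightarrow> state" where
  "vf \<gamma> p = (case p of (sp, sm, np, nm, om) \<Rightarrow>
     (let q = qfun \<gamma> p in
      ( - (2 - q) * sp - 2 * nm\<^sup>2,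
        - (2 - q) * sm - 2 * sqrt 3 * np * nm,
        (q + 2 * sp) * np + 2 * sqrt 3 * sm * nm,
        (q + 2 * sp) * nm + 2 * sqrt 3 * sm * np,
        2 * (q - qstar \<gamma>) * om)))"

definition B1_VI0 :: "state set" where
  "B1_VI0 = {(sp, sm, np, nm, om). om + sp\<^sup>2 + sm\<^sup>2 + nm\<^sup>2 = 1 \<and> om \<ge> 0 \<and> nm > \<bar>np\<bar>}"

definition is_solution :: "real \<Rightarrow> (real \<Rightarrow> state) \<Rightarrow> bool" where
  "is_solution \<gamma> \<phi> \<longleftrightarrow> (\<forall>t. (\<phi> has_vector_derivative vf \<gamma> (\<phi> t)) (at t))"

definition alpha_limit :: "(real \<Rightarrow> state) \<Rightarrow> state set" where
  "alpha_limit \<phi> = {y. \<exists>\<tau> :: nat \<Rightarrow> real. filterlim \<tau> at_bot sequentially \<and>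
                          (\<lambda>k. \<phi> (\<tau> k)) \<longlonglongrightarrow> y}"

definition Omega :: "state \<Rightarrow> real" where
  "Omega p = (case p of (sp, sm, np, nm, om) \<Rightarrow> om)"

definition Taub1 :: state where
  "Taub1 = (-1, 0, 0, 0, 0)"

end

theory Submission
  imports Defs
begin

(* Near T1, namely where 8 (1 + Sigma_+) <= 2 - qstar, the constraint forces
   2 (q - qstar) >= 2 - qstar, so Omega' = 2 (q - qstar) Omega >= 0, while
   F = Sigma_-^2 + N_-^2 obeys F' <= 4 Omega F. Hence F exp (-K Omega) with
   K = 8 / (2 - qstar) is nonincreasing there. If the backward orbit eventually stayed
   near T1, this positive quantity would stay bounded below along the orbit, but it
   tends to 0 along a sequence converging to T1. So the orbit keeps leaving the
   neighbourhood; going back from times where it is close to T1 to its last exit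
   from the neighbourhood, Omega decreases, and a limit of these exit points lies in
   the alpha-limit set, on the boundary of the neighbourhood (so it is not T1), with
   Omega = 0. *)

definition Sp :: "state \<Rightarrow> real" where "Sp p = fst p"
definition Sm :: "state \<Rightarrow> real" where "Sm p = fst (snd p)"
definition Np :: "state \<Rightarrow> real" where "Np p = fst (snd (snd p))"
definition Nm :: "state \<Rightarrow> real" where "Nm p = fst (snd (snd (snd p)))"

lemma Omega_eq: "Omega p = snd (snd (snd (snd p)))"
  by (cases p) (simp add: Omega_def)

lemma qfun_eq: "qfun \<gamma> p = 2 * (Sp p ^ 2 + Sm p ^ 2) + qstar \<gamma> * Omega p"
  by (cases p) (simp add: qfun_def Sp_def Sm_def Omega_def)

lemma vf_components:
  "Sp (vf \<gamma> p) = - (2 - qfun \<gamma> p) * Sp p - 2 * Nm p ^ 2"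
  "Sm (vf \<gamma> p) = - (2 - qfun \<gamma> p) * Sm p - 2 * sqrt 3 * Np p * Nm p"
  "Np (vf \<gamma> p) = (qfun \<gamma> p + 2 * Sp p) * Np p + 2 * sqrt 3 * Sm p * Nm p"
  "Nm (vf \<gamma> p) = (qfun \<gamma> p + 2 * Sp p) * Nm p + 2 * sqrt 3 * Sm p * Np p"
  "Omega (vf \<gamma> p) = 2 * (qfun \<gamma> p - qstar \<gamma>) * Omega p"
  by (cases p; simp add: vf_def Let_def Sp_def Sm_def Np_def Nm_def Omega_def)+

lemma B1_VI0_iff:
  "p \<in> B1_VI0 \<longleftrightarrow>
     Omega p + Sp p ^ 2 + Sm p ^ 2 + Nm p ^ 2 = 1 \<and> 0 \<le> Omega p \<and> \<bar>Np p\<bar> < Nm p"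
  by (cases p) (simp add: B1_VI0_def Sp_def Sm_def Np_def Nm_def Omega_def)

lemma bounded_B1_VI0: "bounded B1_VI0"
proof -
  have "norm p \<le> 2" if "p \<in> B1_VI0" for p
  proof -
    obtain a b c d e where p: "p = (a, b, c, d, e)" by (cases p)
    from that have "e + a^2 + b^2 + d^2 = 1" "0 \<le> e" "\<bar>c\<bar> < d"
      by (simp_all add: B1_VI0_def p)
    moreover have "c^2 \<le> d^2"
      using \<open>\<bar>c\<bar> < d\<close> abs_le_square_iff[of c d] by simp
    moreover have "e^2 \<le> e"
    proof -
      have "e \<le> 1"
        using calculation(1) zero_le_power2[of a] zero_le_power2[of b] zero_le_power2[of d]
        by linarith
      then show ?thesis
        using \<open>0 \<le> e\<close> by (simp add: power2_eq_square mult_left_le)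
    qed
    ultimately have "a^2 + b^2 + c^2 + d^2 + e^2 \<le> 4"
      using zero_le_power2[of a] zero_le_power2[of b] zero_le_power2[of d] by linarith
    then show ?thesis
      using real_sqrt_le_mono[of _ 4] by (simp add: p norm_Pair add.assoc)
  qed
  then show ?thesis
    unfolding bounded_iff by blast
qed

lemma linear_ode_sgn_eq:
  fixes u a :: "real \<Rightarrow> real"
  assumes a: "continuous_on UNIV a"
    and u: "\<And>t. (u has_real_derivative a t * u t) (at t)"
  shows "sgn (u t) = sgn (u s)"
proof -
  have "sgn (u t) = sgn (u s)" if "s \<le> t" for s t
  proof -
    define A where "A r = integral {s..r} a" for r
    have A: "(A has_real_derivative a r) (at r within {s..t})" if "r \<in> {s..t}" for r
      unfolding A_def
      by (rule integral_has_real_derivative[OF continuous_on_subset[OF a] that]) simp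
    have "((\<lambda>r. u r * exp (- A r)) has_real_derivative 0) (at r within {s..t})"
      if "r \<in> {s..t}" for r
      by (rule derivative_eq_intros has_field_derivative_at_within[OF u] A[OF that] refl)+
        (simp add: algebra_simps)
    then obtain c where "\<forall>r\<in>{s..t}. u r * exp (- A r) = c"
      using has_field_derivative_zero_constant[of "{s..t}"] by blast
    moreover have "A s = 0"
      by (simp add: A_def)
    ultimately have "u s = u t * exp (- A t)"
      using \<open>s \<le> t\<close> by force
    then show ?thesis
      by (simp add: sgn_mult)
  qed
  then show ?thesis
    by (metis linear)
qed

lemma last_time_ge:
  fixes g :: "real \<Rightarrow> real"
  assumes "continuous_on {a..b} g" and "a \<le> b" and "c \<le> g a"
  obtains s where "s \<in> {a..b}" "c \<le> g s" "\<And>t. s < t \<Longrightarrow> t \<le> b \<Longrightarrow> g t < c"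
proof -
  define S where "S = {t \<in> {a..b}. c \<le> g t}"
  have "closed S"
    unfolding S_def by (intro continuous_on_closed_Collect_le assms(1) continuous_on_const) simp
  moreover have "S \<subseteq> {a..b}"
    by (auto simp: S_def)
  ultimately have "compact S"
    using compact_Int_closed[OF compact_Icc, of S a b] by (simp add: inf_absorb2)
  moreover have "a \<in> S"
    using assms by (simp add: S_def)
  ultimately obtain s where s: "s \<in> S" "\<forall>t\<in>S. t \<le> s"
    using compact_attains_sup by blast
  show ?thesis
  proof (rule that)
    show "s \<in> {a..b}" "c \<le> g s"
      using s(1) by (simp_all add: S_def)
    show "g t < c" if "s < t" "t \<le> b" for t
    proof (rule ccontr)
      assume "\<not> g t < c"
      then have "t \<in> S"
        using s(1) that by (simp add: S_def)
      with s(2) that show False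
        by force
    qed
  qed
qed

lemma alpha_limit_subseq:
  assumes "filterlim \<sigma> at_bot sequentially" and "bounded (range (\<lambda>k. \<phi> (\<sigma> k)))"
  obtains y r where "y \<in> alpha_limit \<phi>" "strict_mono r" "(\<lambda>k. \<phi> (\<sigma> (r k))) \<longlonglongrightarrow> y"
proof -
  obtain y r where r: "strict_mono r" "((\<lambda>k. \<phi> (\<sigma> k)) \<circ> r) \<longlonglongrightarrow> y"
    using bounded_imp_convergent_subsequence[OF assms(2)] by blast
  have "filterlim (\<sigma> \<circ> r) at_bot sequentially"
    using filterlim_compose[OF assms(1) filterlim_subseq[OF r(1)]] by (simp add: o_def)
  then have "y \<in> alpha_limit \<phi>"
    unfolding alpha_limit_def using r(2) by (auto simp: o_def)
  with r that show ?thesis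
    by (simp add: o_def)
qed

lemma bounded_linear_components:
  "bounded_linear Sp" "bounded_linear Sm" "bounded_linear Np" "bounded_linear Nm"
  "bounded_linear Omega"
  unfolding Sp_def[abs_def] Sm_def[abs_def] Np_def[abs_def] Nm_def[abs_def] Omega_eq[abs_def]
  by (intro bounded_linear_compose[OF bounded_linear_fst] bounded_linear_compose[OF bounded_linear_snd]
      bounded_linear_fst bounded_linear_snd bounded_linear_ident)+

lemma solution_linear_deriv:
  fixes L :: "state \<Rightarrow> real"
  assumes "is_solution \<gamma> \<phi>" and "bounded_linear L"
  shows "((\<lambda>t. L (\<phi> t)) has_real_derivative L (vf \<gamma> (\<phi> t))) (at t)"
  using bounded_linear.has_vector_derivative[OF assms(2)] assms(1)
  unfolding is_solution_def has_real_derivative_iff_has_vector_derivative by blast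

lemma solution_linear_continuous:
  fixes L :: "state \<Rightarrow> real"
  assumes "is_solution \<gamma> \<phi>" and "bounded_linear L"
  shows "continuous_on UNIV (\<lambda>t. L (\<phi> t))"
  using solution_linear_deriv[OF assms]
  by (meson DERIV_isCont continuous_at_imp_continuous_on)

definition constraint_defect :: "state \<Rightarrow> real" where
  "constraint_defect p = Omega p + Sp p ^ 2 + Sm p ^ 2 + Nm p ^ 2 - 1"

definition N_sq_gap :: "state \<Rightarrow> real" where
  "N_sq_gap p = Nm p ^ 2 - Np p ^ 2"

definition Sm_Nm_sq :: "state \<Rightarrow> real" where
  "Sm_Nm_sq p = Sm p ^ 2 + Nm p ^ 2"

context
  fixes \<gamma> :: real and \<phi> :: "real \<Rightarrow> state"
  assumes sol: "is_solution \<gamma> \<phi>"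
begin

lemmas component_derivs = solution_linear_deriv[OF sol bounded_linear_components(1)]
  solution_linear_deriv[OF sol bounded_linear_components(2)]
  solution_linear_deriv[OF sol bounded_linear_components(3)]
  solution_linear_deriv[OF sol bounded_linear_components(4)]
  solution_linear_deriv[OF sol bounded_linear_components(5)]

lemmas component_continuous = solution_linear_continuous[OF sol bounded_linear_components(1)]
  solution_linear_continuous[OF sol bounded_linear_components(2)]
  solution_linear_continuous[OF sol bounded_linear_components(3)]
  solution_linear_continuous[OF sol bounded_linear_components(4)]
  solution_linear_continuous[OF sol bounded_linear_components(5)]

lemma qfun_solution_continuous: "continuous_on UNIV (\<lambda>t. qfun \<gamma> (\<phi> t))"
  unfolding qfun_eq by (intro continuous_intros component_continuous)

lemma constraint_defect_deriv:
  "((\<lambda>t. constraint_defect (\<phi> t)) has_real_derivative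
      2 * qfun \<gamma> (\<phi> t) * constraint_defect (\<phi> t)) (at t)"
  unfolding constraint_defect_def
  by (rule derivative_eq_intros component_derivs refl)+
    (simp add: vf_components qfun_eq algebra_simps power2_eq_square)

lemma N_sq_gap_deriv:
  "((\<lambda>t. N_sq_gap (\<phi> t)) has_real_derivative
      2 * (qfun \<gamma> (\<phi> t) + 2 * Sp (\<phi> t)) * N_sq_gap (\<phi> t)) (at t)"
  unfolding N_sq_gap_def
  by (rule derivative_eq_intros component_derivs refl)+
    (simp add: vf_components algebra_simps power2_eq_square)

lemma Sm_Nm_sq_deriv:
  "((\<lambda>t. Sm_Nm_sq (\<phi> t)) has_real_derivative
      2 * Sm (\<phi> t) * Sm (vf \<gamma> (\<phi> t)) + 2 * Nm (\<phi> t) * Nm (vf \<gamma> (\<phi> t))) (at t)"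
  unfolding Sm_Nm_sq_def
  by (rule derivative_eq_intros component_derivs refl)+ simp

lemma Omega_deriv:
  "((\<lambda>t. Omega (\<phi> t)) has_real_derivative
      2 * (qfun \<gamma> (\<phi> t) - qstar \<gamma>) * Omega (\<phi> t)) (at t)"
  using component_derivs(5) by (simp add: vf_components)

end

lemma B1_VI0_invariant:
  assumes sol: "is_solution \<gamma> \<phi>" and x: "\<phi> 0 \<in> B1_VI0"
  shows "\<phi> t \<in> B1_VI0"
proof -
  note q = qfun_solution_continuous[OF sol]
  have x0: "constraint_defect (\<phi> 0) = 0" "0 \<le> Omega (\<phi> 0)"
    "0 < N_sq_gap (\<phi> 0)" "0 < Nm (\<phi> 0)"
    using x abs_le_square_iff[of "Nm (\<phi> 0)" "Np (\<phi> 0)"]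
    by (auto simp: B1_VI0_iff constraint_defect_def N_sq_gap_def)
  have "sgn (constraint_defect (\<phi> t)) = sgn (constraint_defect (\<phi> 0))"
    by (rule linear_ode_sgn_eq[OF _ constraint_defect_deriv[OF sol]]) (intro continuous_intros q)
  then have constraint: "constraint_defect (\<phi> t) = 0"
    using x0 by (simp add: sgn_if split: if_splits)
  have "sgn (Omega (\<phi> t)) = sgn (Omega (\<phi> 0))"
    by (rule linear_ode_sgn_eq[OF _ Omega_deriv[OF sol]]) (intro continuous_intros q)
  then have Omega: "0 \<le> Omega (\<phi> t)"
    using x0 by (auto simp: sgn_if split: if_splits)
  have gap: "0 < N_sq_gap (\<phi> s)" for s
  proof -
    have "sgn (N_sq_gap (\<phi> s)) = sgn (N_sq_gap (\<phi> 0))"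
      by (rule linear_ode_sgn_eq[OF _ N_sq_gap_deriv[OF sol]])
        (intro continuous_intros q component_continuous[OF sol])
    then show ?thesis
      using x0 by (auto simp: sgn_if split: if_splits)
  qed
  have Nm: "0 < Nm (\<phi> t)"
  proof (rule ccontr)
    assume "\<not> 0 < Nm (\<phi> t)"
    then have "0 \<in> closed_segment (Nm (\<phi> t)) (Nm (\<phi> 0))"
      using x0 by (simp add: closed_segment_eq_real_ivl)
    moreover have "continuous_on (closed_segment t 0) (\<lambda>s. Nm (\<phi> s))"
      using component_continuous(4)[OF sol] by (rule continuous_on_subset) simp
    ultimately obtain s where "Nm (\<phi> s) = 0"
      using IVT'_closed_segment_real[of 0 "\<lambda>s. Nm (\<phi> s)" t 0] by blast
    with gap[of s] show False
      by (simp add: N_sq_gap_def)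
  qed
  show ?thesis
    using constraint Omega gap[of t] Nm abs_le_square_iff[of "Nm (\<phi> t)" "Np (\<phi> t)"]
    by (auto simp: B1_VI0_iff constraint_defect_def N_sq_gap_def)
qed

lemma B1_VI0_Sp_ge_minus_one:
  assumes "p \<in> B1_VI0"
  shows "-1 \<le> Sp p"
proof -
  have "Omega p + Sp p ^ 2 + Sm p ^ 2 + Nm p ^ 2 = 1" "0 \<le> Omega p"
    using assms by (simp_all add: B1_VI0_iff)
  then have "Sp p ^ 2 \<le> 1"
    using zero_le_power2[of "Sm p"] zero_le_power2[of "Nm p"] by linarith
  then show ?thesis
    by (simp add: abs_square_le_1 abs_le_iff)
qed

lemma qfun_near_Taub1:
  assumes p: "p \<in> B1_VI0" and "0 \<le> qstar \<gamma>" and near: "8 * (1 + Sp p) \<le> 2 - qstar \<gamma>"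
  shows "2 - qstar \<gamma> \<le> 2 * (qfun \<gamma> p - qstar \<gamma>)"
proof -
  have c: "Omega p + Sp p ^ 2 + Sm p ^ 2 + Nm p ^ 2 = 1" "0 \<le> Omega p"
    using p by (simp_all add: B1_VI0_iff)
  have "2 - qfun \<gamma> p = (2 - qstar \<gamma>) * Omega p + 2 * Nm p ^ 2"
    using c by (simp add: qfun_eq algebra_simps)
  also have "\<dots> \<le> 2 * (Omega p + Sm p ^ 2 + Nm p ^ 2)"
    using c \<open>0 \<le> qstar \<gamma>\<close> by (simp add: algebra_simps)
  also have "\<dots> = 2 * (1 + Sp p) * (1 - Sp p)"
    using c by (simp add: algebra_simps power2_eq_square)
  also have "\<dots> \<le> 4 * (1 + Sp p)"
    using zero_le_power2[of "1 + Sp p"] by (simp add: power2_eq_square algebra_simps)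
  finally show ?thesis
    using near by (simp add: distrib_left)
qed

lemma Sm_Nm_sq_growth_near_Taub1:
  assumes p: "p \<in> B1_VI0" and qs: "0 \<le> qstar \<gamma>" "qstar \<gamma> < 2"
    and near: "8 * (1 + Sp p) \<le> 2 - qstar \<gamma>"
  shows "2 * Sm p * Sm (vf \<gamma> p) + 2 * Nm p * Nm (vf \<gamma> p)
    \<le> 8 / (2 - qstar \<gamma>) * Sm_Nm_sq p * Omega (vf \<gamma> p)"
proof -
  define w where "w = 1 + Sp p"
  define F where "F = Sm_Nm_sq p"
  have c: "Omega p + Sp p ^ 2 + Sm p ^ 2 + Nm p ^ 2 = 1" and O: "0 \<le> Omega p"
    using p by (simp_all add: B1_VI0_iff)
  have F: "F = Sm p ^ 2 + Nm p ^ 2" and "0 \<le> F" "Nm p ^ 2 \<le> F"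
    by (simp_all add: F_def Sm_Nm_sq_def)
  have q: "2 - qfun \<gamma> p = (2 - qstar \<gamma>) * Omega p + 2 * Nm p ^ 2"
    using c by (simp add: qfun_eq algebra_simps)
  have "0 \<le> w" "w \<le> 1"
    using B1_VI0_Sp_ge_minus_one[OF p] near qs by (simp_all add: w_def distrib_left)
  then have "w \<le> w * (2 - w)"
    by (simp add: algebra_simps mult_left_le)
  also have "w * (2 - w) = F + Omega p"
    using c by (simp add: w_def F algebra_simps power2_eq_square)
  finally have w: "w \<le> F + Omega p" .
  have "2 * Sm p * Sm (vf \<gamma> p) + 2 * Nm p * Nm (vf \<gamma> p)
      = - 2 * (2 - qfun \<gamma> p) * F + 4 * w * Nm p ^ 2"
    by (simp add: vf_components F w_def algebra_simps power2_eq_square)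
  also have "\<dots> \<le> - 4 * Nm p ^ 2 * F + 4 * (F + Omega p) * Nm p ^ 2"
  proof -
    have "2 * Nm p ^ 2 \<le> 2 - qfun \<gamma> p"
      using q qs O by simp
    from mult_right_mono[OF this \<open>0 \<le> F\<close>]
    have "- 2 * (2 - qfun \<gamma> p) * F \<le> - 4 * Nm p ^ 2 * F"
      by (simp add: algebra_simps)
    moreover have "4 * w * Nm p ^ 2 \<le> 4 * (F + Omega p) * Nm p ^ 2"
      using w by (simp add: mult_right_mono)
    ultimately show ?thesis
      by linarith
  qed
  also have "\<dots> \<le> 4 * Omega p * F"
    using mult_left_mono[OF \<open>Nm p ^ 2 \<le> F\<close> O] by (simp add: algebra_simps)
  also have "\<dots> \<le> 8 * Omega p * F"
    using mult_nonneg_nonneg[OF O \<open>0 \<le> F\<close>] by (simp add: mult.commute)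
  also have "\<dots> = 8 / (2 - qstar \<gamma>) * F * ((2 - qstar \<gamma>) * Omega p)"
    using qs by (simp add: field_simps)
  also have "\<dots> \<le> 8 / (2 - qstar \<gamma>) * F * Omega (vf \<gamma> p)"
    using qfun_near_Taub1[OF p qs(1) near] qs O \<open>0 \<le> F\<close>
    by (intro mult_left_mono) (auto simp: vf_components mult_right_mono)
  finally show ?thesis
    by (simp add: F_def)
qed

lemma Taub1_not_alpha_limit_if_eventually_near:
  assumes sol: "is_solution \<gamma> \<phi>" and B1: "\<And>t. \<phi> t \<in> B1_VI0"
    and qs: "0 \<le> qstar \<gamma>" "qstar \<gamma> < 2"
    and near: "\<And>t. t \<le> s \<Longrightarrow> 8 * (1 + Sp (\<phi> t)) \<le> 2 - qstar \<gamma>"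
  shows "Taub1 \<notin> alpha_limit \<phi>"
proof
  assume "Taub1 \<in> alpha_limit \<phi>"
  then obtain \<tau> where \<tau>: "filterlim \<tau> at_bot sequentially" "(\<lambda>k. \<phi> (\<tau> k)) \<longlonglongrightarrow> Taub1"
    by (auto simp: alpha_limit_def)
  define K where "K = 8 / (2 - qstar \<gamma>)"
  define U where "U t = Sm_Nm_sq (\<phi> t) * exp (- K * Omega (\<phi> t))" for t
  have U_deriv: "(U has_real_derivative
      (2 * Sm (\<phi> t) * Sm (vf \<gamma> (\<phi> t)) + 2 * Nm (\<phi> t) * Nm (vf \<gamma> (\<phi> t))
        - K * Sm_Nm_sq (\<phi> t) * Omega (vf \<gamma> (\<phi> t))) * exp (- K * Omega (\<phi> t))) (at t)" for t
    unfolding U_def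
    by (auto intro!: derivative_eq_intros Sm_Nm_sq_deriv[OF sol] component_derivs(5)[OF sol]
        simp: algebra_simps)
  have "U s \<le> U t" if "t \<le> s" for t
  proof (rule DERIV_nonpos_imp_nonincreasing[OF that])
    fix r assume "t \<le> r" "r \<le> s"
    then have "2 * Sm (\<phi> r) * Sm (vf \<gamma> (\<phi> r)) + 2 * Nm (\<phi> r) * Nm (vf \<gamma> (\<phi> r))
        \<le> K * Sm_Nm_sq (\<phi> r) * Omega (vf \<gamma> (\<phi> r))"
      unfolding K_def using Sm_Nm_sq_growth_near_Taub1[OF B1 qs near] by simp
    then show "\<exists>y. (U has_real_derivative y) (at r) \<and> y \<le> 0"
      using U_deriv[of r] by (intro exI[of _ "_ * exp (- K * Omega (\<phi> r))"] conjI)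
        (auto intro: mult_nonpos_nonneg)
  qed
  moreover have "\<forall>\<^sub>F k in sequentially. \<tau> k \<le> s"
    using \<tau>(1) by (simp add: filterlim_at_bot)
  ultimately have "\<forall>\<^sub>F k in sequentially. U s \<le> U (\<tau> k)"
    by (auto elim: eventually_mono)
  moreover have "(\<lambda>k. U (\<tau> k)) \<longlonglongrightarrow> 0"
  proof -
    have "(\<lambda>k. U (\<tau> k)) \<longlonglongrightarrow> (Sm Taub1 ^ 2 + Nm Taub1 ^ 2) * exp (- K * Omega Taub1)"
      unfolding U_def Sm_Nm_sq_def
      by (intro tendsto_intros bounded_linear.tendsto[OF bounded_linear_components(2) \<tau>(2)]
          bounded_linear.tendsto[OF bounded_linear_components(4) \<tau>(2)]
          bounded_linear.tendsto[OF bounded_linear_components(5) \<tau>(2)])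
    then show ?thesis
      by (simp add: Taub1_def Sm_def Nm_def Omega_def)
  qed
  ultimately have "U s \<le> 0"
    using tendsto_lowerbound by (metis trivial_limit_sequentially)
  moreover have "0 < U s"
  proof -
    have "0 < Nm (\<phi> s)"
      using B1[of s] unfolding B1_VI0_iff by (meson abs_ge_zero le_less_trans)
    then show ?thesis
      by (simp add: U_def Sm_Nm_sq_def add_nonneg_pos)
  qed
  ultimately show False
    by simp
qed

lemma Omega_nondecreasing_near_Taub1:
  assumes sol: "is_solution \<gamma> \<phi>" and B1: "\<And>t. \<phi> t \<in> B1_VI0"
    and qs: "0 \<le> qstar \<gamma>" "qstar \<gamma> < 2" and "a \<le> b"
    and near: "\<And>t. a < t \<Longrightarrow> t < b \<Longrightarrow> 8 * (1 + Sp (\<phi> t)) \<le> 2 - qstar \<gamma>"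
  shows "Omega (\<phi> a) \<le> Omega (\<phi> b)"
proof (rule DERIV_nonneg_imp_increasing_open[OF \<open>a \<le> b\<close>])
  fix t assume "a < t" "t < b"
  then have "0 \<le> qfun \<gamma> (\<phi> t) - qstar \<gamma>"
    using qfun_near_Taub1[OF B1 qs(1) near] qs(2) by fastforce
  moreover have "0 \<le> Omega (\<phi> t)"
    using B1[of t] by (simp add: B1_VI0_iff)
  ultimately have "0 \<le> 2 * (qfun \<gamma> (\<phi> t) - qstar \<gamma>) * Omega (\<phi> t)"
    by simp
  then show "\<exists>y. ((\<lambda>t. Omega (\<phi> t)) has_real_derivative y) (at t) \<and> 0 \<le> y"
    using Omega_deriv[OF sol] by blast
next
  show "continuous_on {a..b} (\<lambda>t. Omega (\<phi> t))"
    using component_continuous(5)[OF sol] by (rule continuous_on_subset) simp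
qed

lemma last_exit_before:
  assumes sol: "is_solution \<gamma> \<phi>" and B1: "\<And>t. \<phi> t \<in> B1_VI0"
    and qs: "0 \<le> qstar \<gamma>" "qstar \<gamma> < 2"
    and exits: "\<And>s. \<exists>t\<le>s. 2 - qstar \<gamma> \<le> 8 * (1 + Sp (\<phi> t))"
  obtains \<sigma> where "\<sigma> \<le> \<tau>" "2 - qstar \<gamma> \<le> 8 * (1 + Sp (\<phi> \<sigma>))"
    "Omega (\<phi> \<sigma>) \<le> Omega (\<phi> \<tau>)"
proof -
  obtain t0 where "t0 \<le> \<tau>" "2 - qstar \<gamma> \<le> 8 * (1 + Sp (\<phi> t0))"
    using exits by blast
  moreover have "continuous_on {t0..\<tau>} (\<lambda>t. 8 * (1 + Sp (\<phi> t)))"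
    by (intro continuous_intros continuous_on_subset[OF component_continuous(1)[OF sol]]) simp
  ultimately obtain \<sigma> where \<sigma>: "\<sigma> \<in> {t0..\<tau>}" "2 - qstar \<gamma> \<le> 8 * (1 + Sp (\<phi> \<sigma>))"
    "\<And>t. \<sigma> < t \<Longrightarrow> t \<le> \<tau> \<Longrightarrow> 8 * (1 + Sp (\<phi> t)) < 2 - qstar \<gamma>"
    using last_time_ge by blast
  show ?thesis
  proof (rule that)
    show "\<sigma> \<le> \<tau>" "2 - qstar \<gamma> \<le> 8 * (1 + Sp (\<phi> \<sigma>))"
      using \<sigma>(1,2) by simp_all
    show "Omega (\<phi> \<sigma>) \<le> Omega (\<phi> \<tau>)"
      using \<sigma> by (intro Omega_nondecreasing_near_Taub1[OF sol B1 qs]) (auto intro: less_imp_le)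
  qed
qed

lemma exit_point_in_alpha_limit:
  assumes sol: "is_solution \<gamma> \<phi>" and B1: "\<And>t. \<phi> t \<in> B1_VI0"
    and qs: "0 \<le> qstar \<gamma>" "qstar \<gamma> < 2" and T: "Taub1 \<in> alpha_limit \<phi>"
    and exits: "\<And>s. \<exists>t\<le>s. 2 - qstar \<gamma> \<le> 8 * (1 + Sp (\<phi> t))"
  obtains y where "y \<in> alpha_limit \<phi>" "2 - qstar \<gamma> \<le> 8 * (1 + Sp y)" "Omega y = 0"
proof -
  obtain \<tau> where \<tau>: "filterlim \<tau> at_bot sequentially" "(\<lambda>k. \<phi> (\<tau> k)) \<longlonglongrightarrow> Taub1"
    using T by (auto simp: alpha_limit_def)
  have "\<forall>k. \<exists>s. s \<le> \<tau> k \<and> 2 - qstar \<gamma> \<le> 8 * (1 + Sp (\<phi> s)) \<and> Omega (\<phi> s) \<le> Omega (\<phi> (\<tau> k))"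
    using last_exit_before[OF sol B1 qs exits] by metis
  from choice[OF this] obtain \<sigma> where \<sigma>: "\<And>k. \<sigma> k \<le> \<tau> k"
    "\<And>k. 2 - qstar \<gamma> \<le> 8 * (1 + Sp (\<phi> (\<sigma> k)))" "\<And>k. Omega (\<phi> (\<sigma> k)) \<le> Omega (\<phi> (\<tau> k))"
    by blast
  have "filterlim \<sigma> at_bot sequentially"
    using \<tau>(1) \<sigma>(1) unfolding filterlim_at_bot by (fast elim: eventually_mono order_trans)
  moreover have "bounded (range (\<lambda>k. \<phi> (\<sigma> k)))"
    using B1 by (blast intro: bounded_subset[OF bounded_B1_VI0])
  ultimately obtain y r where y: "y \<in> alpha_limit \<phi>" "strict_mono r"
    "(\<lambda>k. \<phi> (\<sigma> (r k))) \<longlonglongrightarrow> y"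
    by (rule alpha_limit_subseq)
  have "(\<lambda>k. 8 * (1 + Sp (\<phi> (\<sigma> (r k))))) \<longlonglongrightarrow> 8 * (1 + Sp y)"
    by (intro tendsto_intros bounded_linear.tendsto[OF bounded_linear_components(1) y(3)])
  then have "2 - qstar \<gamma> \<le> 8 * (1 + Sp y)"
    by (rule tendsto_lowerbound[OF _ always_eventually]) (use \<sigma>(2) in auto)
  moreover have "Omega y = 0"
  proof (rule antisym)
    have \<Omega>y: "(\<lambda>k. Omega (\<phi> (\<sigma> (r k)))) \<longlonglongrightarrow> Omega y"
      by (rule bounded_linear.tendsto[OF bounded_linear_components(5) y(3)])
    have "(\<lambda>k. Omega (\<phi> (\<tau> (r k)))) \<longlonglongrightarrow> Omega Taub1"
      using bounded_linear.tendsto[OF bounded_linear_components(5) LIMSEQ_subseq_LIMSEQ[OF \<tau>(2) y(2)]]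
      by (simp add: o_def)
    then show "Omega y \<le> 0"
      using \<sigma>(3) by (intro tendsto_le[OF _ _ \<Omega>y]) (auto simp: Taub1_def Omega_def)
    show "0 \<le> Omega y"
      using B1 by (intro tendsto_lowerbound[OF \<Omega>y]) (auto simp: B1_VI0_iff)
  qed
  ultimately show ?thesis
    using that y(1) by blast
qed

theorem mainTheorem1:
  fixes \<gamma> :: real and x :: state and \<phi> :: "real \<Rightarrow> state"
  assumes "2/3 < \<gamma>" and "\<gamma> < 2"
    and "x \<in> B1_VI0"
    and "is_solution \<gamma> \<phi>" and "\<phi> 0 = x"
    and "Taub1 \<in> alpha_limit \<phi>"
  shows "\<exists>y \<in> alpha_limit \<phi>. y \<noteq> Taub1 \<and> Omega y = 0"
proof -
  have qs: "0 \<le> qstar \<gamma>" "qstar \<gamma> < 2"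
    using assms(1,2) by (simp_all add: qstar_def)
  have B1: "\<phi> t \<in> B1_VI0" for t
    using B1_VI0_invariant assms(3-5) by blast
  have "\<not> (\<forall>t\<le>s. 8 * (1 + Sp (\<phi> t)) \<le> 2 - qstar \<gamma>)" for s
    using Taub1_not_alpha_limit_if_eventually_near[OF assms(4) B1 qs] assms(6) by blast
  then have "\<exists>t\<le>s. 2 - qstar \<gamma> \<le> 8 * (1 + Sp (\<phi> t))" for s
    by (auto simp: not_le intro: less_imp_le)
  then obtain y where y: "y \<in> alpha_limit \<phi>" "2 - qstar \<gamma> \<le> 8 * (1 + Sp y)" "Omega y = 0"
    using exit_point_in_alpha_limit[OF assms(4) B1 qs assms(6)] by blast
  have "y \<noteq> Taub1"
    using y(2) qs(2) by (auto simp: Taub1_def Sp_def)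
  with y show ?thesis
    by blast
qed

end
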